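(* Let $z,x,y\in[0,1]$ satisfy $z=x+y$, and write their concise binary expansions as $z=(z_0.z_1z_2\ldots)_2$, $x=(x_0.x_1x_2\ldots)_2$, $y=(y_0.y_1y_2\ldots)_2$. Suppose $0\le \ell<\ell'$ are indices such that $z_\ell=1$, $z_{\ell'}=1$, and $z_j=0$ for all $\ell+1\le j\le \ell'-1$. Then the bit pairs $(x_j,y_j)$ for $\ell\le j\le \ell'$ satisfy exactly one of the following three patterns: (1) $(x_\ell,y_\ell)\in\{(0,1),(1,0)\}$, $(x_j,y_j)=(0,0)$ for all $\ell<j<\ell'$, and $(x_{\ell'},y_{\ell'})\in\{(0,0),(0,1),(1,0)\}$; (2) $(x_\ell,y_\ell)\in\{(0,0),(1,1)\}$, $(x_j,y_j)\in\{(0,1),(1,0)\}$ for all $\ell<j<\ell'$, and $(x_{\ell'},y_{\ell'})=(1,1)$; (3) $(x_\ell,y_\ell)\in\{(0,0),(1,1)\}$, and there are integers $k_1,k_2\ge 0$ with $k_1+k_2=\ell'-\ell-2$ such that $(x_j,y_j)\in\{(0,1),(1,0)\}$ for $\ell<j\le \ell+k_1$, $(x_{\ell+k_1+1},y_{\ell+k_1+1})=(1,1)$, $(x_j,y_j)=(0,0)$ for $\ell+k_1+1<j<\ell'$, and $(x_{\ell'},y_{\ell'})\in\{(0,0),(0,1),(1,0)\}$.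
   Context: A concise binary expansion of a real number is a binary representation $(z_0.z_1z_2\ldots)_2=\sum_{i\ge0} z_i2^{-i}$ with $z_i\in\{0,1\}$ that does not end in an infinite string of 1s. *)

theory Defs
  imports Complex_Main
begin

definition concise_binary_expansion :: "real \<Rightarrow> (nat \<Rightarrow> nat) \<Rightarrow> bool" where
  "concise_binary_expansion r d \<longleftrightarrow>
     (\<forall>i. d i \<in> {0, 1}) \<and>
     (\<lambda>i. real (d i) / 2 ^ i) sums r \<and>
     \<not> (\<exists>N. \<forall>i\<ge>N. d i = 1)"

definition pattern1 :: "nat \<Rightarrow> nat \<Rightarrow> (nat \<Rightarrow> nat) \<Rightarrow> (nat \<Rightarrow> nat) \<Rightarrow> bool" where
  "pattern1 l l' x y \<longleftrightarrow>
     (x l, y l) \<in> {(0, 1), (1, 0)} \<and>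
     (\<forall>j. l < j \<and> j < l' \<longrightarrow> (x j, y j) = (0, 0)) \<and>
     (x l', y l') \<in> {(0, 0), (0, 1), (1, 0)}"

definition pattern2 :: "nat \<Rightarrow> nat \<Rightarrow> (nat \<Rightarrow> nat) \<Rightarrow> (nat \<Rightarrow> nat) \<Rightarrow> bool" where
  "pattern2 l l' x y \<longleftrightarrow>
     (x l, y l) \<in> {(0, 0), (1, 1)} \<and>
     (\<forall>j. l < j \<and> j < l' \<longrightarrow> (x j, y j) \<in> {(0, 1), (1, 0)}) \<and>
     (x l', y l') = (1, 1)"

text \<open>k1, k2 are nonnegative integers with k1 + k2 = l' - l - 2 (stated without
  truncated subtraction).\<close>
definition pattern3 :: "nat \<Rightarrow> nat \<Rightarrow> (nat \<Rightarrow> nat) \<Rightarrow> (nat \<Rightarrow> nat) \<Rightarrow> bool" where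
  "pattern3 l l' x y \<longleftrightarrow>
     (x l, y l) \<in> {(0, 0), (1, 1)} \<and>
     (\<exists>k1 k2 :: nat. int k1 + int k2 = int l' - int l - 2 \<and>
        (\<forall>j. l < j \<and> j \<le> l + k1 \<longrightarrow> (x j, y j) \<in> {(0, 1), (1, 0)}) \<and>
        (x (l + k1 + 1), y (l + k1 + 1)) = (1, 1) \<and>
        (\<forall>j. l + k1 + 1 < j \<and> j < l' \<longrightarrow> (x j, y j) = (0, 0)) \<and>
        (x l', y l') \<in> {(0, 0), (0, 1), (1, 0)})"

end

theory Submission
  imports Defs
begin

text \<open>For concise expansions the integer with binary digits \<open>d\<^sub>0 \<dots> d\<^sub>n\<close> is \<open>\<lfloor>2\<^sup>n r\<rfloor>\<close>,
  so \<open>c\<^sub>n = \<lfloor>2\<^sup>n z\<rfloor> - \<lfloor>2\<^sup>n x\<rfloor> - \<lfloor>2\<^sup>n y\<rfloor> \<in> {0, 1}\<close> is the carry that the digits beyond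
  position \<open>n\<close> pass into position \<open>n\<close>, and \<open>z\<^sub>n\<^sub>+\<^sub>1 + 2 c\<^sub>n = x\<^sub>n\<^sub>+\<^sub>1 + y\<^sub>n\<^sub>+\<^sub>1 + c\<^sub>n\<^sub>+\<^sub>1\<close>.
  At a zero digit of \<open>z\<close> a carry from the right is passed on with digit sum 1, and a new
  carry can only be created with digit sum 2. The three patterns are then the three possibilities for the
  last position \<open>p\<close> in \<open>[\<ell>, \<ell>')\<close> with \<open>c\<^sub>p = 1\<close>: there is none (pattern 1),
  \<open>p = \<ell>' - 1\<close> (pattern 2), or \<open>p < \<ell>' - 1\<close> (pattern 3 with \<open>k\<^sub>1 = p - \<ell>\<close>).\<close>

definition binary_prefix :: "(nat \<Rightarrow> nat) \<Rightarrow> nat \<Rightarrow> int" where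
  "binary_prefix d n = (\<Sum>i\<le>n. int (d i) * 2 ^ (n - i))"

lemma binary_prefix_Suc:
  "binary_prefix d (Suc n) = 2 * binary_prefix d n + int (d (Suc n))"
proof -
  have "(\<Sum>i\<le>n. int (d i) * 2 ^ (Suc n - i)) = 2 * binary_prefix d n"
    unfolding binary_prefix_def sum_distrib_left
    by (rule sum.cong) (auto simp: Suc_diff_le)
  then show ?thesis
    by (simp add: binary_prefix_def)
qed

lemma of_int_binary_prefix:
  "real_of_int (binary_prefix d n) = 2 ^ n * (\<Sum>i<Suc n. real (d i) / 2 ^ i)"
  unfolding binary_prefix_def sum_distrib_left lessThan_Suc_atMost of_int_sum
  by (rule sum.cong) (auto simp: power_diff[where 'a = real])

lemma sums_binary_tail:
  assumes "(\<lambda>i. real (d i) / 2 ^ i) sums r"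
  shows "(\<lambda>i. real (d (i + Suc n)) / 2 ^ Suc i) sums (2 ^ n * r - binary_prefix d n)"
proof -
  have "(\<lambda>i. 2 ^ n * (real (d (i + Suc n)) / 2 ^ (i + Suc n)))
          sums (2 ^ n * (r - (\<Sum>i<Suc n. real (d i) / 2 ^ i)))"
    by (intro sums_mult sums_split_initial_segment assms)
  moreover have "2 ^ n * (real (d (i + Suc n)) / 2 ^ (i + Suc n)) = real (d (i + Suc n)) / 2 ^ Suc i"
    for i :: nat
    by (simp add: power_add)
  ultimately show ?thesis
    by (simp add: of_int_binary_prefix right_diff_distrib)
qed

lemma binary_fraction_bounds:
  fixes d :: "nat \<Rightarrow> nat"
  assumes digits: "\<And>i. d i \<le> 1" and zero: "d k = 0"
    and t: "(\<lambda>i. real (d i) / 2 ^ Suc i) sums t"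
  shows "0 \<le> t" "t < 1"
proof -
  show "0 \<le> t"
    using sums_le[OF _ sums_zero t] by simp
  have gap: "(\<lambda>i. (1/2) ^ Suc i - real (d i) / 2 ^ Suc i) sums (1 - t)"
    by (rule sums_diff[OF power_half_series t])
  have "0 < 1 - t"
    unfolding sums_unique[OF gap]
  proof (rule suminf_pos2[where i = k])
    show "summable (\<lambda>i. (1/2) ^ Suc i - real (d i) / 2 ^ Suc i)"
      using gap by (rule sums_summable)
    show "0 \<le> (1/2) ^ Suc i - real (d i) / 2 ^ Suc i" for i
      using digits[of i] by (simp add: power_one_over divide_right_mono)
    show "0 < (1/2) ^ Suc k - real (d k) / 2 ^ Suc k"
      using zero by simp
  qed
  then show "t < 1" by simp
qed

lemma concise_binary_expansion_prefix:
  assumes "concise_binary_expansion r d"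
  shows "binary_prefix d n = \<lfloor>2 ^ n * r\<rfloor>"
proof -
  have digits: "\<And>i. d i \<le> 1"
    using assms unfolding concise_binary_expansion_def
    by (metis insert_iff le_numeral_extra(4) singletonD zero_le)
  have r: "(\<lambda>i. real (d i) / 2 ^ i) sums r" and not_ones: "\<not> (\<exists>N. \<forall>i\<ge>N. d i = 1)"
    using assms unfolding concise_binary_expansion_def by auto
  obtain i where "i \<ge> Suc n" "d i \<noteq> 1"
    using not_ones by blast
  with digits have "d ((i - Suc n) + Suc n) = 0"
    by (metis le_add_diff_inverse2 le_antisym less_one not_le_imp_less)
  from binary_fraction_bounds[OF digits this sums_binary_tail[OF r]]
  show ?thesis
    by (intro floor_unique[symmetric]) auto
qed

definition carry :: "(nat \<Rightarrow> nat) \<Rightarrow> (nat \<Rightarrow> nat) \<Rightarrow> (nat \<Rightarrow> nat) \<Rightarrow> nat \<Rightarrow> int" where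
  "carry z x y n = binary_prefix z n - binary_prefix x n - binary_prefix y n"

lemma carry_0: "int (z 0) = int (x 0) + int (y 0) + carry z x y 0"
  by (simp add: carry_def binary_prefix_def)

lemma carry_Suc:
  "int (z (Suc n)) + 2 * carry z x y n = int (x (Suc n)) + int (y (Suc n)) + carry z x y (Suc n)"
  by (simp add: carry_def binary_prefix_Suc)

lemma carry_bit:
  assumes "concise_binary_expansion (x + y) zb"
    and "concise_binary_expansion x xb" "concise_binary_expansion y yb"
  shows "carry zb xb yb n \<in> {0, 1}"
proof -
  have "carry zb xb yb n = \<lfloor>2 ^ n * x + 2 ^ n * y\<rfloor> - \<lfloor>2 ^ n * x\<rfloor> - \<lfloor>2 ^ n * y\<rfloor>"
    unfolding carry_def concise_binary_expansion_prefix[OF assms(1)]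
      concise_binary_expansion_prefix[OF assms(2)] concise_binary_expansion_prefix[OF assms(3)]
    by (simp add: distrib_left)
  then show ?thesis
    by (simp add: floor_add)
qed

locale carry_chain =
  fixes z x y :: "nat \<Rightarrow> nat" and c :: "nat \<Rightarrow> int"
  assumes x_bit: "x n \<in> {0, 1}" and y_bit: "y n \<in> {0, 1}" and c_bit: "c n \<in> {0, 1}"
    and c_0: "int (z 0) = int (x 0) + int (y 0) + c 0"
    and c_Suc: "int (z (Suc n)) + 2 * c n = int (x (Suc n)) + int (y (Suc n)) + c (Suc n)"
begin

lemma incoming_carry: "\<exists>e\<in>{0, 1}. int (z n) + 2 * e = int (x n) + int (y n) + c n"
proof (cases n)
  case 0
  then show ?thesis
    using c_0 by force
next
  case (Suc m)
  then show ?thesis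
    using c_Suc[of m] c_bit[of m] by blast
qed

lemma digit_one_with_carry: "z n = 1 \<Longrightarrow> c n = 1 \<Longrightarrow> (x n, y n) \<in> {(0, 0), (1, 1)}"
  using incoming_carry[of n] x_bit[of n] y_bit[of n] by auto

lemma digit_one_without_carry: "z n = 1 \<Longrightarrow> c n = 0 \<Longrightarrow> (x n, y n) \<in> {(0, 1), (1, 0)}"
  using incoming_carry[of n] x_bit[of n] y_bit[of n] by auto

lemma digit_one_carry_out: "z (Suc n) = 1 \<Longrightarrow> c n = 1 \<Longrightarrow> (x (Suc n), y (Suc n)) = (1, 1)"
  using c_Suc[of n] x_bit[of "Suc n"] y_bit[of "Suc n"] c_bit[of "Suc n"] by auto

lemma digit_one_no_carry_out:
  "z (Suc n) = 1 \<Longrightarrow> c n = 0 \<Longrightarrow> (x (Suc n), y (Suc n)) \<in> {(0, 0), (0, 1), (1, 0)}"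
  using c_Suc[of n] x_bit[of "Suc n"] y_bit[of "Suc n"] c_bit[of "Suc n"] by auto

lemma digit_zero_propagates_carry:
  "z (Suc n) = 0 \<Longrightarrow> c (Suc n) = 1 \<Longrightarrow> c n = 1 \<and> (x (Suc n), y (Suc n)) \<in> {(0, 1), (1, 0)}"
  using c_Suc[of n] x_bit[of "Suc n"] y_bit[of "Suc n"] c_bit[of n] by auto

lemma digit_zero_generates_carry:
  "z (Suc n) = 0 \<Longrightarrow> c (Suc n) = 0 \<Longrightarrow> c n = 1 \<Longrightarrow> (x (Suc n), y (Suc n)) = (1, 1)"
  using c_Suc[of n] x_bit[of "Suc n"] y_bit[of "Suc n"] by auto

lemma digit_zero_without_carry:
  "z (Suc n) = 0 \<Longrightarrow> c (Suc n) = 0 \<Longrightarrow> c n = 0 \<Longrightarrow> (x (Suc n), y (Suc n)) = (0, 0)"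
  using c_Suc[of n] x_bit[of "Suc n"] y_bit[of "Suc n"] by auto

lemma zero_run_carry:
  assumes carry: "c b = 1" and zeros: "\<forall>j. a < j \<and> j \<le> b \<longrightarrow> z j = 0"
    and "a \<le> j" "j \<le> b"
  shows "c j = 1"
  using \<open>j \<le> b\<close>
proof (induction j rule: inc_induct)
  case base
  show ?case
    using carry .
next
  case (step n)
  then show ?case
    using digit_zero_propagates_carry[of n] zeros \<open>a \<le> j\<close> by simp
qed

lemma zero_run_digits:
  assumes carry: "c b = 1" and zeros: "\<forall>j. a < j \<and> j \<le> b \<longrightarrow> z j = 0"
    and "a < j" "j \<le> b"
  shows "(x j, y j) \<in> {(0, 1), (1, 0)}"
proof -
  obtain n where j: "j = Suc n"
    using \<open>a < j\<close> less_imp_Suc_add by blast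
  have "c j = 1"
    using zero_run_carry[OF carry zeros] \<open>a < j\<close> \<open>j \<le> b\<close> by simp
  then show ?thesis
    using digit_zero_propagates_carry[of n] zeros \<open>a < j\<close> \<open>j \<le> b\<close> j by simp
qed

context
  fixes l l' :: nat
  assumes run: "l < l'" "z l = 1" "z l' = 1" "\<forall>j. l < j \<and> j < l' \<longrightarrow> z j = 0"
begin

lemma top_index: "l' = Suc (l' - 1)"
  using run(1) by simp

lemma pattern1_if_no_carry:
  assumes no_carry: "\<forall>j. l \<le> j \<and> j < l' \<longrightarrow> c j = 0"
  shows "pattern1 l l' x y"
proof -
  have "(x j, y j) = (0, 0)" if "l < j" "j < l'" for j
    using digit_zero_without_carry[of "j - 1"] run(4) no_carry that by (cases j) auto
  moreover have "(x l, y l) \<in> {(0, 1), (1, 0)}"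
    using digit_one_without_carry run no_carry by simp
  moreover have "(x l', y l') \<in> {(0, 0), (0, 1), (1, 0)}"
    using digit_one_no_carry_out[of "l' - 1"] top_index run no_carry by simp
  ultimately show ?thesis
    unfolding pattern1_def by blast
qed

lemma pattern2_if_carry_below_top:
  assumes carry: "c (l' - 1) = 1"
  shows "pattern2 l l' x y"
proof -
  have zeros: "\<forall>j. l < j \<and> j \<le> l' - 1 \<longrightarrow> z j = 0"
    using run(4) by auto
  have "(x l, y l) \<in> {(0, 0), (1, 1)}"
    using digit_one_with_carry zero_run_carry[OF carry zeros] run by simp
  moreover have "(x j, y j) \<in> {(0, 1), (1, 0)}" if "l < j" "j < l'" for j
    using zero_run_digits[OF carry zeros] that by simp
  moreover have "(x l', y l') = (1, 1)"
    using digit_one_carry_out[of "l' - 1"] top_index run carry by simp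
  ultimately show ?thesis
    unfolding pattern2_def by blast
qed

lemma pattern3_if_last_carry:
  assumes "l \<le> p" "Suc p < l'" and carry: "c p = 1"
    and no_carry: "\<forall>j. p < j \<and> j < l' \<longrightarrow> c j = 0"
  shows "pattern3 l l' x y"
proof -
  have zeros: "\<forall>j. l < j \<and> j \<le> p \<longrightarrow> z j = 0"
    using run(4) \<open>Suc p < l'\<close> by auto
  have "(x l, y l) \<in> {(0, 0), (1, 1)}"
    using digit_one_with_carry zero_run_carry[OF carry zeros] run \<open>l \<le> p\<close> by simp
  moreover have "int (p - l) + int (l' - Suc p - 1) = int l' - int l - 2"
    using \<open>l \<le> p\<close> \<open>Suc p < l'\<close> by simp
  moreover have "(x j, y j) \<in> {(0, 1), (1, 0)}" if "l < j" "j \<le> l + (p - l)" for j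
    using zero_run_digits[OF carry zeros] that by simp
  moreover have "(x (Suc p), y (Suc p)) = (1, 1)"
    using digit_zero_generates_carry[of p] run(4) assms by simp
  moreover have "(x j, y j) = (0, 0)" if "Suc p < j" "j < l'" for j
    using digit_zero_without_carry[of "j - 1"] run(4) no_carry \<open>l \<le> p\<close> that by (cases j) auto
  moreover have "(x l', y l') \<in> {(0, 0), (0, 1), (1, 0)}"
    using digit_one_no_carry_out[of "l' - 1"] top_index run no_carry \<open>Suc p < l'\<close> by simp
  ultimately show ?thesis
    unfolding pattern3_def using \<open>l \<le> p\<close> by (intro conjI exI[of _ "p - l"] exI) auto
qed

lemma zero_run_patterns: "pattern1 l l' x y \<or> pattern2 l l' x y \<or> pattern3 l l' x y"
proof (cases "\<exists>j. l \<le> j \<and> j < l' \<and> c j = 1")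
  case False
  then show ?thesis
    using pattern1_if_no_carry c_bit by blast
next
  case True
  let ?carries = "{j. l \<le> j \<and> j < l' \<and> c j = 1}"
  define p where "p = Max ?carries"
  have "finite ?carries" "?carries \<noteq> {}"
    using True by auto
  then have p: "l \<le> p" "p < l'" "c p = 1" and maximal: "\<forall>j\<in>?carries. j \<le> p"
    using Max_in[of ?carries] unfolding p_def by auto
  have after_p: "\<forall>j. p < j \<and> j < l' \<longrightarrow> c j = 0"
  proof (intro allI impI)
    fix j
    assume j: "p < j \<and> j < l'"
    then have "j \<notin> ?carries"
      using maximal by fastforce
    then show "c j = 0"
      using j c_bit[of j] p(1) by auto
  qed
  show ?thesis
  proof (cases "Suc p = l'")
    case True
    then have "c (l' - 1) = 1"
      using p(3) by auto
    then show ?thesis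
      using pattern2_if_carry_below_top by simp
  next
    case False
    then show ?thesis
      using pattern3_if_last_carry[OF p(1) _ p(3) after_p] p(2) by simp
  qed
qed

end

end

lemma pattern1_excludes_others: "pattern1 l l' x y \<Longrightarrow> \<not> pattern2 l l' x y \<and> \<not> pattern3 l l' x y"
  unfolding pattern1_def pattern2_def pattern3_def by auto

lemma pattern2_excludes_pattern3: "pattern2 l l' x y \<Longrightarrow> \<not> pattern3 l l' x y"
  unfolding pattern2_def pattern3_def by auto

theorem theorem4p4:
  fixes z x y :: real and zb xb yb :: "nat \<Rightarrow> nat" and l l' :: nat
  assumes "z \<in> {0..1}" "x \<in> {0..1}" "y \<in> {0..1}"
    and "z = x + y"
    and "concise_binary_expansion z zb"
    and "concise_binary_expansion x xb"
    and "concise_binary_expansion y yb"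
    and "l < l'"
    and "zb l = 1" "zb l' = 1"
    and "\<forall>j. l + 1 \<le> j \<and> j \<le> l' - 1 \<longrightarrow> zb j = 0"
  shows "(pattern1 l l' xb yb \<and> \<not> pattern2 l l' xb yb \<and> \<not> pattern3 l l' xb yb) \<or>
         (\<not> pattern1 l l' xb yb \<and> pattern2 l l' xb yb \<and> \<not> pattern3 l l' xb yb) \<or>
         (\<not> pattern1 l l' xb yb \<and> \<not> pattern2 l l' xb yb \<and> pattern3 l l' xb yb)"
proof -
  interpret carry_chain zb xb yb "carry zb xb yb"
  proof
    show "xb n \<in> {0, 1}" "yb n \<in> {0, 1}" for n
      using assms(6,7) unfolding concise_binary_expansion_def by auto
    show "carry zb xb yb n \<in> {0, 1}" for n
      using carry_bit[of x y zb xb yb n] assms(4-7) by simp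
  qed (rule carry_0, rule carry_Suc)
  have "pattern1 l l' xb yb \<or> pattern2 l l' xb yb \<or> pattern3 l l' xb yb"
    by (rule zero_run_patterns) (use assms(8-11) in auto)
  then show ?thesis
    using pattern1_excludes_others pattern2_excludes_pattern3 by blast
qed

end
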